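(* Under the setting of the previous statement (Bernoulli vector $\boldsymbol{I}$ with $\Pr(I_j=1)=p_j\in(0,1)$, independent uniform vectors $\boldsymbol{U}_0,\boldsymbol{U}_1$, and $U_m=U_{0,m}^{1-p_m}U_{1,m}^{I_m}$), the copula of $\boldsymbol{U}$ can be written as $$C(\boldsymbol{u}) = \prod_{m=1}^d u_m\left(1 + \sum_{k=1}^d\sum_{1\le j_1<\dots<j_k\le d}\nu_{j_1\dots j_k}\prod_{n=1}^k\left(1-u_{j_n}^{\frac{p_{j_n}}{1-p_{j_n}}}\right)\right),\qquad \boldsymbol{u}\in[0,1]^d,$$ where $\nu_{j_1\dots j_k} = E\left[\prod_{n=1}^k\frac{I_{j_n}-p_{j_n}}{p_{j_n}}\right]$ (in particular $\nu_{j}=0$ for $k=1$). *)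

theory Defs
  imports "HOL-Probability.Probability"
begin

definition copula_of ::
  "'a measure \<Rightarrow> (nat \<Rightarrow> 'a \<Rightarrow> real) \<Rightarrow> nat \<Rightarrow> ((nat \<Rightarrow> real) \<Rightarrow> real) \<Rightarrow> bool" where
  "copula_of M X d C \<longleftrightarrow>
     (\<forall>x::nat \<Rightarrow> real.
        measure M {\<omega> \<in> space M. \<forall>m\<in>{1..d}. X m \<omega> \<le> x m}
          = C (\<lambda>m. measure M {\<omega> \<in> space M. X m \<omega> \<le> x m}))"

end

theory Submission
  imports Defs
begin

text \<open>
  Given \<open>I\<close>, the coordinates \<open>U\<^sub>m = U\<^sub>0\<^sub>m powr (1 - p\<^sub>m) * U\<^sub>1\<^sub>m ^ I\<^sub>m\<close> are
  independent, and an elementary integration shows that on \<open>{I\<^sub>m = r}\<close> the conditional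
  distribution function of \<open>U\<^sub>m\<close> at \<open>u \<in> [0, 1]\<close> is
  \<open>u * (1 + (r - p\<^sub>m) / p\<^sub>m * (1 - u powr (p\<^sub>m / (1 - p\<^sub>m))))\<close>.
  Since \<open>E I\<^sub>m = p\<^sub>m\<close>, each \<open>U\<^sub>m\<close> is uniform, so the copula is the joint distribution
  function itself: the expectation over \<open>I\<close> of the product of the conditional distribution
  functions. Expanding the product of the factors
  \<open>1 + Y\<^sub>m * (1 - u\<^sub>m powr (p\<^sub>m / (1 - p\<^sub>m)))\<close> with \<open>Y\<^sub>m = (I\<^sub>m - p\<^sub>m) / p\<^sub>m\<close>
  over subsets \<open>J\<close> and integrating yields the coefficients \<open>\<nu>\<^sub>J = E (\<Prod>j\<in>J. Y\<^sub>j)\<close>;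
  these vanish for singletons \<open>J\<close> because each \<open>Y\<^sub>j\<close> is centred.
\<close>

lemma prod_mult_one_plus_mult:
  fixes u a b :: "'a \<Rightarrow> 'b :: comm_semiring_1"
  assumes "finite K"
  shows "(\<Prod>m\<in>K. u m * (1 + a m * b m))
       = (\<Prod>m\<in>K. u m) * (\<Sum>J\<in>Pow K. (\<Prod>j\<in>J. a j) * (\<Prod>j\<in>J. b j))"
proof -
  have "(\<Prod>m\<in>K. a m * b m + 1) = (\<Sum>J\<in>Pow K. (\<Prod>j\<in>J. a j * b j) * (\<Prod>j\<in>K - J. 1))"
    by (rule prod_add[OF assms])
  thus ?thesis by (simp add: prod.distrib add.commute)
qed

lemma (in prob_space) indep_var_nn_integral_iterated:
  assumes XY: "indep_var S X T Y" and f: "f \<in> borel_measurable (S \<Otimes>\<^sub>M T)"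
  shows "(\<integral>\<^sup>+ \<omega>. f (X \<omega>, Y \<omega>) \<partial>M) = (\<integral>\<^sup>+ \<omega>. \<integral>\<^sup>+ \<omega>'. f (X \<omega>, Y \<omega>') \<partial>M \<partial>M)"
proof -
  have X: "random_variable S X" and Y: "random_variable T Y"
    using XY by (rule indep_var_rv1, rule indep_var_rv2)
  interpret PY: prob_space "distr M T Y" by (rule prob_space_distr) (rule Y)
  have sets_eq: "sets (distr M S X \<Otimes>\<^sub>M distr M T Y) = sets (S \<Otimes>\<^sub>M T)"
    by (intro sets_pair_measure_cong sets_distr)
  have f': "f \<in> borel_measurable (distr M S X \<Otimes>\<^sub>M distr M T Y)"
    using f measurable_cong_sets[OF sets_eq refl] by blast
  have "(\<integral>\<^sup>+ \<omega>. f (X \<omega>, Y \<omega>) \<partial>M) = (\<integral>\<^sup>+ z. f z \<partial>distr M (S \<Otimes>\<^sub>M T) (\<lambda>\<omega>. (X \<omega>, Y \<omega>)))"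
    by (rule nn_integral_distr[OF measurable_Pair[OF X Y], symmetric])
      (subst measurable_distr_eq1, rule f)
  also have "\<dots> = (\<integral>\<^sup>+ z. f z \<partial>(distr M S X \<Otimes>\<^sub>M distr M T Y))"
    using XY unfolding indep_var_distribution_eq by metis
  also have "\<dots> = (\<integral>\<^sup>+ x. \<integral>\<^sup>+ y. f (x, y) \<partial>distr M T Y \<partial>distr M S X)"
    by (rule PY.nn_integral_fst[OF f', symmetric])
  also have "\<dots> = (\<integral>\<^sup>+ \<omega>. \<integral>\<^sup>+ y. f (X \<omega>, y) \<partial>distr M T Y \<partial>M)"
    by (rule nn_integral_distr[OF X PY.borel_measurable_nn_integral_fst[OF f']])
  also have "\<dots> = (\<integral>\<^sup>+ \<omega>. \<integral>\<^sup>+ \<omega>'. f (X \<omega>, Y \<omega>') \<partial>M \<partial>M)"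
  proof (rule nn_integral_cong)
    fix \<omega> assume "\<omega> \<in> space M"
    hence "X \<omega> \<in> space (distr M S X)" using measurable_space[OF X] by simp
    from measurable_Pair2[OF f' this]
    show "(\<integral>\<^sup>+ y. f (X \<omega>, y) \<partial>distr M T Y) = (\<integral>\<^sup>+ \<omega>'. f (X \<omega>, Y \<omega>') \<partial>M)"
      by (rule nn_integral_distr[OF Y])
  qed
  finally show ?thesis .
qed

definition uniform_cdf :: "real \<Rightarrow> real" where
  "uniform_cdf x = max 0 (min 1 x)"

lemma uniform_cdf_nonneg: "0 \<le> uniform_cdf x"
  and uniform_cdf_le_one: "uniform_cdf x \<le> 1"
  by (auto simp: uniform_cdf_def)

lemma powr_le_iff_le_powr_inverse:
  fixes t x a :: real
  assumes "0 \<le> t" "0 \<le> x" "0 < a"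
  shows "t powr a \<le> x \<longleftrightarrow> t \<le> x powr (1 / a)"
proof
  assume "t powr a \<le> x"
  hence "(t powr a) powr (1 / a) \<le> x powr (1 / a)" using assms by (intro powr_mono2) auto
  thus "t \<le> x powr (1 / a)" using assms by (simp add: powr_powr)
next
  assume "t \<le> x powr (1 / a)"
  hence "t powr a \<le> (x powr (1 / a)) powr a" using assms by (intro powr_mono2) auto
  thus "t powr a \<le> x" using assms by (simp add: powr_powr)
qed

lemma nn_integral_uniform_scaled_le:
  fixes c x :: real
  assumes "0 < c"
  shows "(\<integral>\<^sup>+ w. indicator {0..1} w * indicator {w. c * w \<le> x} w \<partial>lborel)
       = ennreal (uniform_cdf (x / c))"
proof -
  have "(\<lambda>w. indicator {0..1} w * indicator {w. c * w \<le> x} w :: ennreal)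
        = indicator {0..min 1 (x / c)}"
    using assms by (auto simp: fun_eq_iff split: split_indicator simp: pos_le_divide_eq mult.commute)
  thus ?thesis
    by (auto simp: emeasure_lborel_Icc_eq uniform_cdf_def min_def max_def ennreal_neg)
qed

lemma nn_integral_uniform_powr_le:
  fixes a x :: real
  assumes "0 < a"
  shows "(\<integral>\<^sup>+ t. indicator {0..1} t * indicator {t. t powr a \<le> x} t \<partial>lborel)
       = ennreal (uniform_cdf x powr (1 / a))"
proof (cases "x < 0")
  case True
  have "(\<lambda>t. indicator {0..1} t * indicator {t. t powr a \<le> x} t :: ennreal) = (\<lambda>_. 0)"
    using True by (auto simp: fun_eq_iff split: split_indicator)
      (metis powr_ge_zero not_le order.strict_trans1)
  thus ?thesis using True by (simp add: uniform_cdf_def)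
next
  case False
  have "uniform_cdf x powr (1 / a) = min 1 (x powr (1 / a))"
    using False assms powr_mono2[of "1 / a" x 1]
    by (cases "x \<le> 1") (auto simp: uniform_cdf_def min_def ge_one_powr_ge_zero)
  moreover have "(\<lambda>t. indicator {0..1} t * indicator {t. t powr a \<le> x} t :: ennreal)
        = indicator {0..min 1 (x powr (1 / a))}"
    using False assms
    by (auto simp: fun_eq_iff split: split_indicator simp: powr_le_iff_le_powr_inverse)
  ultimately show ?thesis by (simp add: emeasure_lborel_Icc_eq)
qed

lemma nn_integral_scaled_powr_neg:
  fixes a s x :: real
  assumes "0 < s" "s \<le> 1" "0 \<le> x" "a < 1"
  shows "(\<integral>\<^sup>+ t. ennreal (x * t powr (- a)) * indicator {s..1} t \<partial>lborel)
       = ennreal (x * (1 - s powr (1 - a)) / (1 - a))"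
proof -
  define F where "F t = x * t powr (1 - a) / (1 - a)" for t
  have "(\<integral>\<^sup>+ t. ennreal (x * t powr (- a)) * indicator {s..1} t \<partial>lborel) = ennreal (F 1 - F s)"
  proof (rule nn_integral_FTC_Icc)
    fix t assume "t \<in> {s..1}"
    hence t: "0 < t" using assms by auto
    show "0 \<le> x * t powr (- a)" using assms by simp
    have "(F has_real_derivative x * ((1 - a) * t powr (1 - a - 1)) / (1 - a)) (at t)"
      unfolding F_def by (intro DERIV_cdivide DERIV_cmult has_real_derivative_powr t)
    thus "(F has_real_derivative x * t powr (- a)) (at t)"
      using assms by simp
  qed (use assms in auto)
  thus ?thesis by (simp add: F_def diff_divide_distrib right_diff_distrib)
qed

lemma nn_integral_uniform_cdf_div_powr_interior:
  fixes a x :: real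
  assumes a: "0 < a" "a < 1" and x: "0 < x" "x < 1"
  shows "(\<integral>\<^sup>+ t. indicator {0<..1} t * ennreal (uniform_cdf (x / t powr a)) \<partial>lborel)
       = ennreal ((x - a * x powr (1 / a)) / (1 - a))"
proof -
  define s where "s = x powr (1 / a)"
  have s_powr: "s powr a = x" using x a by (simp add: s_def powr_powr)
  have "x powr (1 / a) < 1 powr (1 / a)" using x a by (intro powr_less_mono2) auto
  hence s: "0 < s" "s < 1" using x by (auto simp: s_def)
  have "indicator {0<..1} t * ennreal (uniform_cdf (x / t powr a))
        = indicator {0<..<s} t + ennreal (x * t powr (- a)) * indicator {s..1} t" for t
    \<comment> \<open>\<open>s\<close> solves \<open>s powr a = x\<close>: below it the cdf is saturated at 1.\<close>
  proof (cases "0 < t \<and> t \<le> 1")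
    case True
    hence tp: "0 < t powr a" by simp
    show ?thesis
    proof (cases "t < s")
      case lt: True
      have "t powr a < x"
        using lt True a powr_less_mono2[of a t s] by (simp add: s_powr)
      hence "1 < x / t powr a" using tp by (simp add: less_divide_eq)
      thus ?thesis using True lt by (simp add: uniform_cdf_def indicator_def)
    next
      case ge: False
      have "x \<le> t powr a"
        using ge s a powr_mono2[of a s t] by (simp add: s_powr)
      hence "x / t powr a \<le> 1" using tp by (simp add: divide_le_eq)
      moreover have "x / t powr a = x * t powr (- a)"
        using True by (simp add: powr_minus divide_inverse)
      ultimately show ?thesis
        using True ge tp x by (simp add: uniform_cdf_def indicator_def)
    qed
  qed (use s in \<open>auto simp: indicator_def\<close>)
  hence "(\<integral>\<^sup>+ t. indicator {0<..1} t * ennreal (uniform_cdf (x / t powr a)) \<partial>lborel)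
      = ennreal s + ennreal (x * (1 - s powr (1 - a)) / (1 - a))"
    using s x a by (simp add: nn_integral_add nn_integral_scaled_powr_neg)
  also have "\<dots> = ennreal (s + x * (1 - s powr (1 - a)) / (1 - a))"
    using s x a powr_le1[of "1 - a" s] by (intro ennreal_plus[symmetric]) auto
  also have "x * s powr (1 - a) = s"
    using s s_powr x by (simp add: powr_diff)
  hence "s + x * (1 - s powr (1 - a)) / (1 - a) = (x - a * s) / (1 - a)"
    using a by (simp add: field_simps)
  finally show ?thesis
    using x by (simp add: s_def uniform_cdf_def)
qed

text \<open>The left-hand side is \<open>P(U powr a * W \<le> x)\<close> for independent uniform \<open>U\<close>, \<open>W\<close>,
  computed by conditioning on \<open>U = t\<close>.\<close>
lemma nn_integral_uniform_cdf_div_powr: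
  fixes a x :: real
  assumes a: "0 < a" "a < 1"
  shows "(\<integral>\<^sup>+ t. indicator {0<..1} t * ennreal (uniform_cdf (x / t powr a)) \<partial>lborel)
       = ennreal ((uniform_cdf x - a * uniform_cdf x powr (1 / a)) / (1 - a))"
proof -
  consider "x \<le> 0" | "1 \<le> x" | "0 < x" "x < 1" by linarith
  then show ?thesis
  proof cases
    case 1
    have "indicator {0<..1} t * ennreal (uniform_cdf (x / t powr a)) = 0" for t
    proof (cases "0 < t")
      case True
      hence "x / t powr a \<le> 0" using 1 by (simp add: divide_nonpos_pos)
      thus ?thesis by (simp add: uniform_cdf_def)
    qed (simp add: indicator_def)
    hence "(\<lambda>t. indicator {0<..1} t * ennreal (uniform_cdf (x / t powr a))) = (\<lambda>_. 0)"
      by (rule ext)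
    thus ?thesis using 1 by (simp add: uniform_cdf_def)
  next
    case 2
    have "indicator {0<..1} t * ennreal (uniform_cdf (x / t powr a)) = indicator {0<..1} t" for t
    proof (cases "t \<in> {0<..1}")
      case True
      hence "t powr a \<le> 1" "0 < t powr a" using a by (auto intro: powr_le1)
      hence "1 \<le> x / t powr a" using 2 by (simp add: le_divide_eq)
      thus ?thesis using True by (simp add: uniform_cdf_def)
    qed (auto simp: indicator_def)
    hence "(\<lambda>t. indicator {0<..1} t * ennreal (uniform_cdf (x / t powr a))) = indicator {0<..1}"
      by (rule ext)
    thus ?thesis using 2 a by (simp add: uniform_cdf_def)
  next
    case 3
    thus ?thesis using a nn_integral_uniform_cdf_div_powr_interior[OF a 3]
      by (simp add: uniform_cdf_def)
  qed
qed

text \<open>The distribution function of \<open>U\<^sub>0 powr (1 - q) * U\<^sub>1 ^ r\<close> for independent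
  uniform \<open>U\<^sub>0\<close>, \<open>U\<^sub>1\<close> and \<open>r \<in> {0, 1}\<close>.\<close>
definition bernoulli_mixture_cdf :: "real \<Rightarrow> real \<Rightarrow> real \<Rightarrow> real" where
  "bernoulli_mixture_cdf q r x =
     uniform_cdf x * (1 + (r - q) / q * (1 - uniform_cdf x powr (q / (1 - q))))"

lemma
  fixes q x :: real
  assumes "0 < q" "q < 1"
  shows bernoulli_mixture_cdf_0: "bernoulli_mixture_cdf q 0 x = uniform_cdf x powr (1 / (1 - q))"
    and bernoulli_mixture_cdf_1: "bernoulli_mixture_cdf q 1 x
           = (uniform_cdf x - (1 - q) * uniform_cdf x powr (1 / (1 - q))) / q"
proof -
  let ?u = "uniform_cdf x"
  have "?u * ?u powr (q / (1 - q)) = ?u powr (1 / (1 - q))"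
  proof (cases "?u = 0")
    case False
    hence "?u * ?u powr (q / (1 - q)) = ?u powr (1 + q / (1 - q))"
      using uniform_cdf_nonneg[of x] by (simp add: powr_add)
    also have "1 + q / (1 - q) = 1 / (1 - q)" using assms by (simp add: field_simps)
    finally show ?thesis .
  qed simp
  moreover have "(0 - q) / q = - 1" and "(1 - q) / q * q = 1 - q" using assms by simp_all
  ultimately show "bernoulli_mixture_cdf q 0 x = ?u powr (1 / (1 - q))"
    and "bernoulli_mixture_cdf q 1 x = (?u - (1 - q) * ?u powr (1 / (1 - q))) / q"
    using assms by (simp_all add: bernoulli_mixture_cdf_def divide_simps algebra_simps)
qed

lemma bernoulli_mixture_cdf_nonneg:
  assumes "0 < q" "q < 1" "r \<in> {0, 1}"
  shows "0 \<le> bernoulli_mixture_cdf q r x"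
proof -
  let ?u = "uniform_cdf x"
  have "?u powr (1 / (1 - q)) \<le> ?u"
  proof (cases "?u = 0")
    case False
    moreover have "1 \<le> 1 / (1 - q)" using assms by simp
    ultimately show ?thesis
      using uniform_cdf_nonneg[of x] uniform_cdf_le_one[of x] by (intro powr_le_one_le) auto
  qed simp
  moreover have "(1 - q) * ?u powr (1 / (1 - q)) \<le> ?u powr (1 / (1 - q))"
    using assms by (intro mult_left_le_one_le) auto
  ultimately have "0 \<le> (?u - (1 - q) * ?u powr (1 / (1 - q))) / q"
    using assms by (intro divide_nonneg_pos) auto
  thus ?thesis
    using assms by (auto simp only: bernoulli_mixture_cdf_0 bernoulli_mixture_cdf_1 powr_ge_zero)
qed

definition mixture_sublevel :: "real \<Rightarrow> real \<Rightarrow> real \<Rightarrow> (real \<times> real) set" where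
  "mixture_sublevel q r x = {(t, w). t powr (1 - q) * (if r = 1 then w else 1) \<le> x}"

lemma borel_measurable_indicator_mixture_sublevel_joint:
  "(\<lambda>z. indicator (mixture_sublevel q (fst z) x) (snd z) :: ennreal)
     \<in> borel_measurable (borel \<Otimes>\<^sub>M (borel \<Otimes>\<^sub>M borel))"
proof -
  have "(\<lambda>z. indicator (mixture_sublevel q (fst z) x) (snd z) :: ennreal)
      = indicator {z \<in> space (borel \<Otimes>\<^sub>M (borel \<Otimes>\<^sub>M borel)).
          fst (snd z) powr (1 - q) * (if fst z = 1 then snd (snd z) else 1) \<le> x}"
    by (auto simp: fun_eq_iff mixture_sublevel_def indicator_def space_pair_measure)
  also have "\<dots> \<in> borel_measurable (borel \<Otimes>\<^sub>M (borel \<Otimes>\<^sub>M borel))"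
    by (intro borel_measurable_indicator) measurable
  finally show ?thesis .
qed

lemma borel_measurable_indicator_mixture_sublevel:
  "(indicator (mixture_sublevel q r x) :: real \<times> real \<Rightarrow> ennreal) \<in> borel_measurable (borel \<Otimes>\<^sub>M borel)"
proof -
  have "(\<lambda>z. (r, z)) \<in> measurable (borel \<Otimes>\<^sub>M borel) (borel \<Otimes>\<^sub>M (borel \<Otimes>\<^sub>M borel))"
    by measurable
  from measurable_compose[OF this borel_measurable_indicator_mixture_sublevel_joint]
  show ?thesis by (simp only: fst_conv snd_conv)
qed

lemma (in prob_space) nn_integral_uniform_powr_mult_uniform_le:
  assumes V: "distributed M lborel V (indicator {0..1})"
    and W: "distributed M lborel W (indicator {0..1})"
    and a: "0 < a" "a < 1"
  shows "(\<integral>\<^sup>+ \<omega>. \<integral>\<^sup>+ \<omega>'. indicator {w. V \<omega> powr a * w \<le> x} (W \<omega>') \<partial>M \<partial>M)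
       = ennreal ((uniform_cdf x - a * uniform_cdf x powr (1 / a)) / (1 - a))"
proof -
  have [measurable]: "V \<in> borel_measurable M" "W \<in> borel_measurable M"
    using distributed_measurable[OF V] distributed_measurable[OF W] by simp_all
  define K where "K t = (\<integral>\<^sup>+ w. indicator {0..1} w * indicator {w. t powr a * w \<le> x} w \<partial>lborel)" for t
  have "(\<integral>\<^sup>+ \<omega>. \<integral>\<^sup>+ \<omega>'. indicator {w. V \<omega> powr a * w \<le> x} (W \<omega>') \<partial>M \<partial>M) = (\<integral>\<^sup>+ \<omega>. K (V \<omega>) \<partial>M)"
    unfolding K_def by (intro nn_integral_cong distributed_nn_integral[OF W, symmetric]) measurable
  also have "\<dots> = (\<integral>\<^sup>+ t. indicator {0..1} t * K t \<partial>lborel)"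
    unfolding K_def by (rule distributed_nn_integral[OF V, symmetric]) measurable
  also have "\<dots> = (\<integral>\<^sup>+ t. indicator {0<..1} t * ennreal (uniform_cdf (x / t powr a)) \<partial>lborel)"
  proof (rule nn_integral_cong_AE)
    have pointwise: "indicator {0..1} t * K t
        = indicator {0<..1} t * ennreal (uniform_cdf (x / t powr a))" if "t \<noteq> 0" for t
    proof (cases "t \<in> {0<..1}")
      case True
      have "K t = ennreal (uniform_cdf (x / t powr a))"
        unfolding K_def using True by (intro nn_integral_uniform_scaled_le) simp
      moreover have "t \<in> {0..1}" using True by auto
      ultimately show ?thesis using True by simp
    next
      case False
      hence "t \<notin> {0..1}" using that by auto
      thus ?thesis using False by simp
    qed
    show "AE t in lborel. indicator {0..1} t * K t
            = indicator {0<..1} t * ennreal (uniform_cdf (x / t powr a))"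
      using AE_lborel_singleton[of 0] by (rule eventually_mono) (rule pointwise)
  qed
  also have "\<dots> = ennreal ((uniform_cdf x - a * uniform_cdf x powr (1 / a)) / (1 - a))"
    by (rule nn_integral_uniform_cdf_div_powr[OF a])
  finally show ?thesis .
qed

lemma (in prob_space) nn_integral_mixture_sublevel:
  assumes V: "distributed M lborel V (indicator {0..1})"
    and W: "distributed M lborel W (indicator {0..1})"
    and q: "0 < q" "q < 1" and r: "r \<in> {0, 1}"
  shows "(\<integral>\<^sup>+ \<omega>. \<integral>\<^sup>+ \<omega>'. indicator (mixture_sublevel q r x) (V \<omega>, W \<omega>') \<partial>M \<partial>M)
       = ennreal (bernoulli_mixture_cdf q r x)"
proof (cases "r = 1")
  case False
  have [measurable]: "V \<in> borel_measurable M"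
    using distributed_measurable[OF V] by simp
  have "(\<integral>\<^sup>+ \<omega>. \<integral>\<^sup>+ \<omega>'. indicator (mixture_sublevel q r x) (V \<omega>, W \<omega>') \<partial>M \<partial>M)
      = (\<integral>\<^sup>+ \<omega>. indicator {t. t powr (1 - q) \<le> x} (V \<omega>) \<partial>M)"
    using False by (intro nn_integral_cong) (simp add: mixture_sublevel_def indicator_def emeasure_space_1)
  also have "\<dots> = (\<integral>\<^sup>+ t. indicator {0..1} t * indicator {t. t powr (1 - q) \<le> x} t \<partial>lborel)"
    by (rule distributed_nn_integral[OF V, symmetric]) measurable
  finally show ?thesis
    using False r q by (simp add: nn_integral_uniform_powr_le bernoulli_mixture_cdf_0)
next
  case True
  have "(\<integral>\<^sup>+ \<omega>. \<integral>\<^sup>+ \<omega>'. indicator (mixture_sublevel q r x) (V \<omega>, W \<omega>') \<partial>M \<partial>M)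
      = (\<integral>\<^sup>+ \<omega>. \<integral>\<^sup>+ \<omega>'. indicator {w. V \<omega> powr (1 - q) * w \<le> x} (W \<omega>') \<partial>M \<partial>M)"
    using True by (intro nn_integral_cong) (simp add: mixture_sublevel_def indicator_def)
  also have "\<dots> = ennreal (bernoulli_mixture_cdf q r x)"
    using True q by (simp add: nn_integral_uniform_powr_mult_uniform_le[OF V W] bernoulli_mixture_cdf_1)
  finally show ?thesis .
qed

locale bernoulli_uniform_mixture = prob_space M for M :: "'a measure" +
  fixes d :: nat and p :: "nat \<Rightarrow> real" and I :: "nat \<Rightarrow> 'a \<Rightarrow> nat"
    and U0 U1 :: "nat \<Rightarrow> 'a \<Rightarrow> real"
  assumes p_range: "\<And>j. j \<in> {1..d} \<Longrightarrow> 0 < p j \<and> p j < 1"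
    and I_rv: "\<And>j. j \<in> {1..d} \<Longrightarrow> I j \<in> measurable M (count_space UNIV)"
    and I_01: "\<And>j \<omega>. j \<in> {1..d} \<Longrightarrow> \<omega> \<in> space M \<Longrightarrow> I j \<omega> \<in> {0, 1}"
    and I_marg: "\<And>j. j \<in> {1..d} \<Longrightarrow> measure M {\<omega> \<in> space M. I j \<omega> = 1} = p j"
    and U0_unif: "\<And>m. m \<in> {1..d} \<Longrightarrow> distributed M lborel (U0 m) (\<lambda>x. indicator {0..1} x)"
    and U1_unif: "\<And>m. m \<in> {1..d} \<Longrightarrow> distributed M lborel (U1 m) (\<lambda>x. indicator {0..1} x)"
    and U0_indep: "indep_vars (\<lambda>_. borel) U0 {1..d}"
    and U1_indep: "indep_vars (\<lambda>_. borel) U1 {1..d}"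
    and vec_indep: "indep_vars (\<lambda>_. Pi\<^sub>M {1..d} (\<lambda>_. borel))
        (\<lambda>i \<omega>. if i = (0::nat) then (\<lambda>m\<in>{1..d}. real (I m \<omega>))
                else if i = 1 then (\<lambda>m\<in>{1..d}. U0 m \<omega>)
                else (\<lambda>m\<in>{1..d}. U1 m \<omega>)) {0, 1, 2}"
begin

abbreviation D :: "nat set" where "D \<equiv> {1..d}"
abbreviation N :: "(nat \<Rightarrow> real) measure" where "N \<equiv> Pi\<^sub>M D (\<lambda>_. borel)"

definition I_vec :: "'a \<Rightarrow> nat \<Rightarrow> real" where "I_vec \<omega> = (\<lambda>m\<in>D. real (I m \<omega>))"
definition U0_vec :: "'a \<Rightarrow> nat \<Rightarrow> real" where "U0_vec \<omega> = (\<lambda>m\<in>D. U0 m \<omega>)"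
definition U1_vec :: "'a \<Rightarrow> nat \<Rightarrow> real" where "U1_vec \<omega> = (\<lambda>m\<in>D. U1 m \<omega>)"

definition U :: "nat \<Rightarrow> 'a \<Rightarrow> real" where
  "U m \<omega> = U0 m \<omega> powr (1 - p m) * U1 m \<omega> ^ I m \<omega>"

definition I_normalized :: "nat \<Rightarrow> 'a \<Rightarrow> real" where
  "I_normalized m \<omega> = (real (I m \<omega>) - p m) / p m"

lemma U0_measurable[measurable]: "m \<in> D \<Longrightarrow> U0 m \<in> borel_measurable M"
  using distributed_measurable[OF U0_unif] by simp

lemma U1_measurable[measurable]: "m \<in> D \<Longrightarrow> U1 m \<in> borel_measurable M"
  using distributed_measurable[OF U1_unif] by simp

lemma I_measurable[measurable]: "m \<in> D \<Longrightarrow> (\<lambda>\<omega>. real (I m \<omega>)) \<in> borel_measurable M"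
  using I_rv by (rule measurable_compose) simp_all

definition random_vectors :: "nat \<Rightarrow> 'a \<Rightarrow> nat \<Rightarrow> real" where
  "random_vectors i \<omega> = (if i = 0 then I_vec \<omega> else if i = 1 then U0_vec \<omega> else U1_vec \<omega>)"

lemma indep_vars_random_vectors: "indep_vars (\<lambda>_. N) random_vectors {0, 1, 2}"
  using vec_indep unfolding random_vectors_def[abs_def] I_vec_def U0_vec_def U1_vec_def .

lemma indep_U0_vec_U1_vec: "indep_var N U0_vec N U1_vec"
proof -
  have "indep_var (Pi\<^sub>M {1} (\<lambda>_. N)) (\<lambda>\<omega>. restrict (\<lambda>i. random_vectors i \<omega>) {1})
                  (Pi\<^sub>M {2} (\<lambda>_. N)) (\<lambda>\<omega>. restrict (\<lambda>i. random_vectors i \<omega>) {2})"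
    using indep_vars_random_vectors by (intro indep_var_restrict) auto
  hence "indep_var N ((\<lambda>f. f 1) \<circ> (\<lambda>\<omega>. restrict (\<lambda>i. random_vectors i \<omega>) {1}))
                   N ((\<lambda>f. f 2) \<circ> (\<lambda>\<omega>. restrict (\<lambda>i. random_vectors i \<omega>) {2}))"
    by (rule indep_var_compose) (auto intro: measurable_component_singleton)
  thus ?thesis by (simp add: comp_def random_vectors_def)
qed

text \<open>\<open>indep_var\<close> requires both variables to live in the same measurable space,
  hence the duplicated \<open>I_vec\<close>.\<close>
lemma indep_I_vec_U_vecs:
  "indep_var (N \<Otimes>\<^sub>M N) (\<lambda>\<omega>. (I_vec \<omega>, I_vec \<omega>)) (N \<Otimes>\<^sub>M N) (\<lambda>\<omega>. (U0_vec \<omega>, U1_vec \<omega>))"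
proof -
  have "indep_var (Pi\<^sub>M {0} (\<lambda>_. N)) (\<lambda>\<omega>. restrict (\<lambda>i. random_vectors i \<omega>) {0})
                  (Pi\<^sub>M {1, 2} (\<lambda>_. N)) (\<lambda>\<omega>. restrict (\<lambda>i. random_vectors i \<omega>) {1, 2})"
    using indep_vars_random_vectors by (intro indep_var_restrict) auto
  hence "indep_var (N \<Otimes>\<^sub>M N) ((\<lambda>f. (f 0, f 0)) \<circ> (\<lambda>\<omega>. restrict (\<lambda>i. random_vectors i \<omega>) {0}))
                   (N \<Otimes>\<^sub>M N) ((\<lambda>f. (f 1, f 2)) \<circ> (\<lambda>\<omega>. restrict (\<lambda>i. random_vectors i \<omega>) {1, 2}))"
    by (rule indep_var_compose) (auto intro!: measurable_Pair measurable_component_singleton)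
  thus ?thesis by (simp add: comp_def random_vectors_def)
qed

lemma nn_integral_prod_U0_U1:
  assumes K: "K \<subseteq> D" and g: "\<And>m. m \<in> K \<Longrightarrow> g m \<in> borel_measurable (borel \<Otimes>\<^sub>M borel)"
  shows "(\<integral>\<^sup>+ \<omega>. (\<Prod>m\<in>K. g m (U0 m \<omega>, U1 m \<omega>)) \<partial>M)
       = (\<Prod>m\<in>K. \<integral>\<^sup>+ \<omega>. \<integral>\<^sup>+ \<omega>'. g m (U0 m \<omega>, U1 m \<omega>') \<partial>M \<partial>M)"
proof -
  have fin: "finite K" using K finite_subset by blast
  have KD: "m \<in> K \<Longrightarrow> m \<in> D" for m using K by auto
  define f where "f z = (\<Prod>m\<in>K. g m (fst z m, snd z m))" for z
  have f_meas: "f \<in> borel_measurable (N \<Otimes>\<^sub>M N)"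
    unfolding f_def
  proof (intro borel_measurable_prod_ennreal)
    fix m assume m: "m \<in> K"
    hence [measurable]: "(\<lambda>v. v m) \<in> measurable N borel"
      using KD by (intro measurable_component_singleton) auto
    have "(\<lambda>z. (fst z m, snd z m)) \<in> measurable (N \<Otimes>\<^sub>M N) (borel \<Otimes>\<^sub>M borel)"
      by measurable
    from measurable_compose[OF this g[OF m]]
    show "(\<lambda>z. g m (fst z m, snd z m)) \<in> borel_measurable (N \<Otimes>\<^sub>M N)" .
  qed
  have "(\<integral>\<^sup>+ \<omega>. (\<Prod>m\<in>K. g m (U0 m \<omega>, U1 m \<omega>)) \<partial>M) = (\<integral>\<^sup>+ \<omega>. f (U0_vec \<omega>, U1_vec \<omega>) \<partial>M)"
    using KD by (intro nn_integral_cong prod.cong) (auto simp: f_def U0_vec_def U1_vec_def)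
  also have "\<dots> = (\<integral>\<^sup>+ \<omega>. \<integral>\<^sup>+ \<omega>'. f (U0_vec \<omega>, U1_vec \<omega>') \<partial>M \<partial>M)"
    by (rule indep_var_nn_integral_iterated[OF indep_U0_vec_U1_vec f_meas])
  also have "\<dots> = (\<integral>\<^sup>+ \<omega>. \<integral>\<^sup>+ \<omega>'. (\<Prod>m\<in>K. g m (U0 m \<omega>, U1 m \<omega>')) \<partial>M \<partial>M)"
    using KD by (intro nn_integral_cong prod.cong) (auto simp: f_def U0_vec_def U1_vec_def)
  also have "\<dots> = (\<integral>\<^sup>+ \<omega>. (\<Prod>m\<in>K. \<integral>\<^sup>+ \<omega>'. g m (U0 m \<omega>, U1 m \<omega>') \<partial>M) \<partial>M)"
  proof (rule nn_integral_cong)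
    fix \<omega>
    show "(\<integral>\<^sup>+ \<omega>'. (\<Prod>m\<in>K. g m (U0 m \<omega>, U1 m \<omega>')) \<partial>M) = (\<Prod>m\<in>K. \<integral>\<^sup>+ \<omega>'. g m (U0 m \<omega>, U1 m \<omega>') \<partial>M)"
      by (rule indep_vars_nn_integral[OF fin indep_vars_compose2[OF indep_vars_subset[OF U1_indep K],
            where Y="\<lambda>m w. g m (U0 m \<omega>, w)"]])
        (auto intro: measurable_Pair2[OF g])
  qed
  also have "\<dots> = (\<Prod>m\<in>K. \<integral>\<^sup>+ \<omega>. \<integral>\<^sup>+ \<omega>'. g m (U0 m \<omega>, U1 m \<omega>') \<partial>M \<partial>M)"
  proof (rule indep_vars_nn_integral[OF fin indep_vars_compose2[OF indep_vars_subset[OF U0_indep K],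
        where Y="\<lambda>m t. \<integral>\<^sup>+ \<omega>'. g m (t, U1 m \<omega>') \<partial>M"]])
    fix m assume m: "m \<in> K"
    hence [measurable]: "U1 m \<in> borel_measurable M" using KD by simp
    have "(\<lambda>z. g m (fst z, U1 m (snd z))) \<in> borel_measurable (borel \<Otimes>\<^sub>M M)"
      using g[OF m] by measurable
    from borel_measurable_nn_integral_fst[OF this]
    show "(\<lambda>t. \<integral>\<^sup>+ \<omega>'. g m (t, U1 m \<omega>') \<partial>M) \<in> borel_measurable borel"
      by (simp only: fst_conv snd_conv)
  qed simp
  finally show ?thesis .
qed

lemma nn_integral_prod_mixture_sublevel:
  assumes K: "K \<subseteq> D" and r: "\<And>m. m \<in> K \<Longrightarrow> r m \<in> {0, 1}"
  shows "(\<integral>\<^sup>+ \<omega>. (\<Prod>m\<in>K. indicator (mixture_sublevel (p m) (r m) (x m)) (U0 m \<omega>, U1 m \<omega>)) \<partial>M)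
       = (\<Prod>m\<in>K. ennreal (bernoulli_mixture_cdf (p m) (r m) (x m)))"
  using K p_range r
  by (subst nn_integral_prod_U0_U1[OF K borel_measurable_indicator_mixture_sublevel])
    (auto intro!: prod.cong nn_integral_mixture_sublevel U0_unif U1_unif)

lemma U_eq_mixture:
  assumes "m \<in> D" "\<omega> \<in> space M"
  shows "U m \<omega> = U0 m \<omega> powr (1 - p m) * (if real (I m \<omega>) = 1 then U1 m \<omega> else 1)"
  using I_01[OF assms] by (auto simp: U_def)

lemma U_measurable[measurable]:
  assumes "m \<in> D"
  shows "U m \<in> borel_measurable M"
proof -
  have "(\<lambda>\<omega>. U0 m \<omega> powr (1 - p m) * (if real (I m \<omega>) = 1 then U1 m \<omega> else 1)) \<in> borel_measurable M"
    using assms by measurable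
  thus ?thesis using measurable_cong[of M "U m", OF U_eq_mixture[OF assms]] by blast
qed

lemma indicator_U_le:
  assumes K: "K \<subseteq> D" and \<omega>: "\<omega> \<in> space M"
  shows "indicator {\<omega> \<in> space M. \<forall>m\<in>K. U m \<omega> \<le> x m} \<omega>
       = (\<Prod>m\<in>K. indicator (mixture_sublevel (p m) (real (I m \<omega>)) (x m)) (U0 m \<omega>, U1 m \<omega>) :: ennreal)"
proof -
  have fin: "finite K" using K finite_subset by blast
  have "(U0 m \<omega>, U1 m \<omega>) \<in> mixture_sublevel (p m) (real (I m \<omega>)) (x m) \<longleftrightarrow> U m \<omega> \<le> x m"
    if "m \<in> K" for m
    using K that \<omega> by (simp add: U_eq_mixture mixture_sublevel_def subset_iff)
  thus ?thesis
    using \<omega> fin by (cases "\<forall>m\<in>K. U m \<omega> \<le> x m") (auto simp: indicator_def prod_zero_iff)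
qed

lemma sets_U_le:
  assumes K: "K \<subseteq> D"
  shows "{\<omega> \<in> space M. \<forall>m\<in>K. U m \<omega> \<le> x m} \<in> sets M"
proof (intro sets.sets_Collect_finite_All)
  show "finite K" using K finite_subset by blast
  fix m assume "m \<in> K"
  hence [measurable]: "U m \<in> borel_measurable M" using K by auto
  show "{\<omega> \<in> space M. U m \<omega> \<le> x m} \<in> sets M" by measurable
qed

lemma borel_measurable_prod_mixture_sublevel:
  assumes K: "K \<subseteq> D"
  shows "(\<lambda>z. \<Prod>m\<in>K. indicator (mixture_sublevel (p m) (fst (fst z) m) (x m))
                                 (fst (snd z) m, snd (snd z) m) :: ennreal)
           \<in> borel_measurable ((N \<Otimes>\<^sub>M N) \<Otimes>\<^sub>M (N \<Otimes>\<^sub>M N))"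
proof (intro borel_measurable_prod_ennreal)
  fix m assume "m \<in> K"
  hence [measurable]: "(\<lambda>v. v m) \<in> measurable N borel"
    using K by (intro measurable_component_singleton) auto
  have "(\<lambda>z. (fst (fst z) m, fst (snd z) m, snd (snd z) m))
      \<in> measurable ((N \<Otimes>\<^sub>M N) \<Otimes>\<^sub>M (N \<Otimes>\<^sub>M N)) (borel \<Otimes>\<^sub>M (borel \<Otimes>\<^sub>M borel))"
    by measurable
  from measurable_compose[OF this borel_measurable_indicator_mixture_sublevel_joint]
  show "(\<lambda>z. indicator (mixture_sublevel (p m) (fst (fst z) m) (x m)) (fst (snd z) m, snd (snd z) m) :: ennreal)
      \<in> borel_measurable ((N \<Otimes>\<^sub>M N) \<Otimes>\<^sub>M (N \<Otimes>\<^sub>M N))"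
    by (simp only: fst_conv snd_conv)
qed

lemma emeasure_U_le:
  assumes K: "K \<subseteq> D"
  shows "emeasure M {\<omega> \<in> space M. \<forall>m\<in>K. U m \<omega> \<le> x m}
       = (\<integral>\<^sup>+ \<omega>. ennreal (\<Prod>m\<in>K. bernoulli_mixture_cdf (p m) (real (I m \<omega>)) (x m)) \<partial>M)"
proof -
  have KD: "m \<in> K \<Longrightarrow> m \<in> D" for m using K by auto
  define f where "f z = (\<Prod>m\<in>K. indicator (mixture_sublevel (p m) (fst (fst z) m) (x m))
                                    (fst (snd z) m, snd (snd z) m) :: ennreal)"
    for z :: "((nat \<Rightarrow> real) \<times> (nat \<Rightarrow> real)) \<times> (nat \<Rightarrow> real) \<times> (nat \<Rightarrow> real)"
  have "emeasure M {\<omega> \<in> space M. \<forall>m\<in>K. U m \<omega> \<le> x m}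
      = (\<integral>\<^sup>+ \<omega>. indicator {\<omega> \<in> space M. \<forall>m\<in>K. U m \<omega> \<le> x m} \<omega> \<partial>M)"
    by (rule nn_integral_indicator[symmetric, OF sets_U_le[OF K]])
  also have "\<dots> = (\<integral>\<^sup>+ \<omega>. f ((I_vec \<omega>, I_vec \<omega>), (U0_vec \<omega>, U1_vec \<omega>)) \<partial>M)"
    using KD by (intro nn_integral_cong)
      (auto simp: indicator_U_le[OF K] f_def I_vec_def U0_vec_def U1_vec_def intro!: prod.cong)
  also have "\<dots> = (\<integral>\<^sup>+ \<omega>. \<integral>\<^sup>+ \<omega>'. f ((I_vec \<omega>, I_vec \<omega>), (U0_vec \<omega>', U1_vec \<omega>')) \<partial>M \<partial>M)"
    unfolding f_def
    by (rule indep_var_nn_integral_iterated[OF indep_I_vec_U_vecs borel_measurable_prod_mixture_sublevel[OF K]])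
  also have "\<dots> = (\<integral>\<^sup>+ \<omega>. \<integral>\<^sup>+ \<omega>'. (\<Prod>m\<in>K. indicator (mixture_sublevel (p m) (real (I m \<omega>)) (x m))
                                      (U0 m \<omega>', U1 m \<omega>')) \<partial>M \<partial>M)"
    using KD by (intro nn_integral_cong prod.cong) (auto simp: f_def I_vec_def U0_vec_def U1_vec_def)
  also have "\<dots> = (\<integral>\<^sup>+ \<omega>. (\<Prod>m\<in>K. ennreal (bernoulli_mixture_cdf (p m) (real (I m \<omega>)) (x m))) \<partial>M)"
    using KD I_01 by (intro nn_integral_cong nn_integral_prod_mixture_sublevel[OF K]) auto
  also have "\<dots> = (\<integral>\<^sup>+ \<omega>. ennreal (\<Prod>m\<in>K. bernoulli_mixture_cdf (p m) (real (I m \<omega>)) (x m)) \<partial>M)"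
    using KD I_01 p_range
    by (intro nn_integral_cong prod_ennreal bernoulli_mixture_cdf_nonneg) auto
  finally show ?thesis .
qed

lemma integrable_prod_I_normalized:
  assumes J: "J \<subseteq> D"
  shows "integrable M (\<lambda>\<omega>. \<Prod>j\<in>J. I_normalized j \<omega>)"
proof (rule integrable_const_bound[where B="\<Prod>j\<in>J. 1 / p j"])
  have "\<bar>I_normalized j \<omega>\<bar> \<le> 1 / p j" if "j \<in> J" "\<omega> \<in> space M" for j \<omega>
  proof -
    have "j \<in> D" using J that by auto
    hence "0 < p j" "p j < 1" "I j \<omega> \<in> {0, 1}" using p_range I_01 that by auto
    hence "\<bar>real (I j \<omega>) - p j\<bar> \<le> 1" by auto
    thus ?thesis using \<open>0 < p j\<close> by (simp add: I_normalized_def abs_divide divide_right_mono)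
  qed
  thus "AE \<omega> in M. norm (\<Prod>j\<in>J. I_normalized j \<omega>) \<le> (\<Prod>j\<in>J. 1 / p j)"
    by (intro AE_I2) (simp add: abs_prod prod_mono)
  have [measurable]: "I_normalized j \<in> borel_measurable M" if "j \<in> J" for j
  proof -
    have "j \<in> D" using J that by auto
    thus ?thesis unfolding I_normalized_def[abs_def] by measurable
  qed
  show "(\<lambda>\<omega>. \<Prod>j\<in>J. I_normalized j \<omega>) \<in> borel_measurable M"
    by (intro borel_measurable_prod) simp
qed

lemma integral_I_normalized:
  assumes m: "m \<in> D"
  shows "(\<integral>\<omega>. I_normalized m \<omega> \<partial>M) = 0"
proof -
  have "(\<integral>\<omega>. real (I m \<omega>) \<partial>M) = (\<integral>\<omega>. indicator {\<omega> \<in> space M. I m \<omega> = 1} \<omega> \<partial>M)"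
    using I_01[OF m] by (intro Bochner_Integration.integral_cong) (auto simp: indicator_def)
  also have "\<dots> = p m"
  proof -
    have "{\<omega> \<in> space M. I m \<omega> = 1} \<in> sets M"
      using I_rv[OF m] by measurable
    thus ?thesis using I_marg[OF m] by simp
  qed
  finally have "(\<integral>\<omega>. real (I m \<omega>) \<partial>M) = p m" .
  moreover have "integrable M (\<lambda>\<omega>. real (I m \<omega>))"
    using I_01[OF m] m by (intro integrable_const_bound[where B=1] AE_I2) fastforce+
  ultimately show ?thesis
    by (simp add: I_normalized_def prob_space)
qed

lemma measure_U_le:
  assumes K: "K \<subseteq> D"
  shows "measure M {\<omega> \<in> space M. \<forall>m\<in>K. U m \<omega> \<le> x m}
       = (\<Prod>m\<in>K. uniform_cdf (x m)) *
           (\<Sum>J\<in>Pow K. (\<integral>\<omega>. (\<Prod>j\<in>J. I_normalized j \<omega>) \<partial>M) *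
                         (\<Prod>j\<in>J. 1 - uniform_cdf (x j) powr (p j / (1 - p j))))"
proof -
  have fin: "finite K" using K finite_subset by blast
  have KD: "m \<in> K \<Longrightarrow> m \<in> D" for m using K by auto
  define c where "c j = 1 - uniform_cdf (x j) powr (p j / (1 - p j))" for j
  define g where "g \<omega> = (\<Prod>m\<in>K. bernoulli_mixture_cdf (p m) (real (I m \<omega>)) (x m))" for \<omega>
  have g_eq: "g \<omega> = (\<Prod>m\<in>K. uniform_cdf (x m)) * (\<Sum>J\<in>Pow K. (\<Prod>j\<in>J. I_normalized j \<omega>) * (\<Prod>j\<in>J. c j))" for \<omega>
    unfolding g_def bernoulli_mixture_cdf_def I_normalized_def c_def
    by (rule prod_mult_one_plus_mult[OF fin])
  have int: "integrable M (\<lambda>\<omega>. (\<Prod>j\<in>J. I_normalized j \<omega>) * (\<Prod>j\<in>J. c j))" if "J \<in> Pow K" for J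
    using that K by (intro integrable_mult_left integrable_prod_I_normalized) auto
  have g_int: "integrable M g"
    unfolding g_eq by (intro integrable_mult_right Bochner_Integration.integrable_sum int)
  have g_nonneg: "0 \<le> g \<omega>" if "\<omega> \<in> space M" for \<omega>
    using KD I_01 p_range that unfolding g_def by (intro prod_nonneg bernoulli_mixture_cdf_nonneg) auto
  have "emeasure M {\<omega> \<in> space M. \<forall>m\<in>K. U m \<omega> \<le> x m} = (\<integral>\<^sup>+ \<omega>. ennreal (g \<omega>) \<partial>M)"
    unfolding g_def by (rule emeasure_U_le[OF K])
  also have "\<dots> = ennreal (\<integral>\<omega>. g \<omega> \<partial>M)"
    using g_nonneg by (intro nn_integral_eq_integral g_int AE_I2)
  finally have "measure M {\<omega> \<in> space M. \<forall>m\<in>K. U m \<omega> \<le> x m} = (\<integral>\<omega>. g \<omega> \<partial>M)"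
    using g_nonneg by (intro measure_eq_emeasure_eq_ennreal integral_nonneg_AE AE_I2)
  also have "\<dots> = (\<Prod>m\<in>K. uniform_cdf (x m)) *
                    (\<Sum>J\<in>Pow K. (\<integral>\<omega>. (\<Prod>j\<in>J. I_normalized j \<omega>) \<partial>M) * (\<Prod>j\<in>J. c j))"
    unfolding g_eq using int by (simp add: Bochner_Integration.integral_sum)
  finally show ?thesis unfolding c_def .
qed

lemma measure_U_le_single:
  assumes m: "m \<in> D"
  shows "measure M {\<omega> \<in> space M. U m \<omega> \<le> y} = uniform_cdf y"
proof -
  have "measure M {\<omega> \<in> space M. U m \<omega> \<le> y} = measure M {\<omega> \<in> space M. \<forall>m'\<in>{m}. U m' \<omega> \<le> y}"
    by simp
  also have "\<dots> = uniform_cdf y * (\<Sum>J\<in>Pow {m}. (\<integral>\<omega>. (\<Prod>j\<in>J. I_normalized j \<omega>) \<partial>M) *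
                         (\<Prod>j\<in>J. 1 - uniform_cdf y powr (p j / (1 - p j))))"
    using measure_U_le[of "{m}" "\<lambda>_. y"] m by simp
  also have "Pow {m} = {{}, {m}}" by auto
  finally show ?thesis
    using integral_I_normalized[OF m] by (simp add: prob_space)
qed

theorem copula_of_U:
  "copula_of M U d (\<lambda>u. (\<Prod>m\<in>D. u m) *
     (1 + (\<Sum>J\<in>{J. J \<subseteq> D \<and> J \<noteq> {}}. (\<integral>\<omega>. (\<Prod>j\<in>J. I_normalized j \<omega>) \<partial>M) *
                                      (\<Prod>n\<in>J. 1 - u n powr (p n / (1 - p n))))))"
  unfolding copula_of_def
proof (intro allI)
  fix x :: "nat \<Rightarrow> real"
  let ?u = "\<lambda>m. measure M {\<omega> \<in> space M. U m \<omega> \<le> x m}"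
  let ?\<nu> = "\<lambda>J. \<integral>\<omega>. (\<Prod>j\<in>J. I_normalized j \<omega>) \<partial>M"
  have u: "\<And>m. m \<in> D \<Longrightarrow> ?u m = uniform_cdf (x m)"
    by (rule measure_U_le_single)
  have "Pow D = insert {} {J. J \<subseteq> D \<and> J \<noteq> {}}" by auto
  hence "(\<Sum>J\<in>Pow D. ?\<nu> J * (\<Prod>j\<in>J. 1 - uniform_cdf (x j) powr (p j / (1 - p j))))
       = ?\<nu> {} + (\<Sum>J\<in>{J. J \<subseteq> D \<and> J \<noteq> {}}. ?\<nu> J * (\<Prod>j\<in>J. 1 - uniform_cdf (x j) powr (p j / (1 - p j))))"
    by (simp add: sum.insert)
  also have "\<dots> = 1 + (\<Sum>J\<in>{J. J \<subseteq> D \<and> J \<noteq> {}}. ?\<nu> J * (\<Prod>j\<in>J. 1 - ?u j powr (p j / (1 - p j))))"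
    using u by (auto simp: prob_space intro!: sum.cong prod.cong arg_cong2[where f = "(*)"])
  finally have "(\<Sum>J\<in>Pow D. ?\<nu> J * (\<Prod>j\<in>J. 1 - uniform_cdf (x j) powr (p j / (1 - p j))))
       = 1 + (\<Sum>J\<in>{J. J \<subseteq> D \<and> J \<noteq> {}}. ?\<nu> J * (\<Prod>j\<in>J. 1 - ?u j powr (p j / (1 - p j))))" .
  moreover have "(\<Prod>m\<in>D. uniform_cdf (x m)) = (\<Prod>m\<in>D. ?u m)"
    using u by simp
  ultimately show "measure M {\<omega> \<in> space M. \<forall>m\<in>D. U m \<omega> \<le> x m}
      = (\<Prod>m\<in>D. ?u m) * (1 + (\<Sum>J\<in>{J. J \<subseteq> D \<and> J \<noteq> {}}. ?\<nu> J * (\<Prod>n\<in>J. 1 - ?u n powr (p n / (1 - p n)))))"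
    using measure_U_le[of D x] by simp
qed

end

theorem corollary3p2:
  fixes M :: "'a measure" and d :: nat
    and p :: "nat \<Rightarrow> real"
    and I :: "nat \<Rightarrow> 'a \<Rightarrow> nat"
    and U0 U1 :: "nat \<Rightarrow> 'a \<Rightarrow> real"
  assumes "prob_space M"
    and p_range: "\<And>j. j \<in> {1..d} \<Longrightarrow> 0 < p j \<and> p j < 1"
    and I_rv: "\<And>j. j \<in> {1..d} \<Longrightarrow> I j \<in> measurable M (count_space UNIV)"
    and I_01: "\<And>j \<omega>. j \<in> {1..d} \<Longrightarrow> \<omega> \<in> space M \<Longrightarrow> I j \<omega> \<in> {0, 1}"
    and I_marg: "\<And>j. j \<in> {1..d} \<Longrightarrow> measure M {\<omega> \<in> space M. I j \<omega> = 1} = p j"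
    and U0_unif: "\<And>m. m \<in> {1..d} \<Longrightarrow>
                    distributed M lborel (U0 m) (\<lambda>x. indicator {0..1} x)"
    and U1_unif: "\<And>m. m \<in> {1..d} \<Longrightarrow>
                    distributed M lborel (U1 m) (\<lambda>x. indicator {0..1} x)"
    and U0_indep: "prob_space.indep_vars M (\<lambda>_. borel) U0 {1..d}"
    and U1_indep: "prob_space.indep_vars M (\<lambda>_. borel) U1 {1..d}"
    and vec_indep: "prob_space.indep_vars M (\<lambda>_. Pi\<^sub>M {1..d} (\<lambda>_. borel))
        (\<lambda>i \<omega>. if i = (0::nat) then (\<lambda>m\<in>{1..d}. real (I m \<omega>))
                else if i = 1 then (\<lambda>m\<in>{1..d}. U0 m \<omega>)
                else (\<lambda>m\<in>{1..d}. U1 m \<omega>)) {0, 1, 2}"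
  shows "copula_of M (\<lambda>m \<omega>. U0 m \<omega> powr (1 - p m) * U1 m \<omega> ^ I m \<omega>) d
           (\<lambda>u. (\<Prod>m\<in>{1..d}. u m) *
              (1 + (\<Sum>J\<in>{J. J \<subseteq> {1..d} \<and> J \<noteq> {}}.
                     integral\<^sup>L M (\<lambda>\<omega>. \<Prod>j\<in>J. (real (I j \<omega>) - p j) / p j) *
                     (\<Prod>n\<in>J. 1 - u n powr (p n / (1 - p n))))))
         \<and> (\<forall>j\<in>{1..d}. integral\<^sup>L M (\<lambda>\<omega>. \<Prod>i\<in>{j}. (real (I i \<omega>) - p i) / p i) = 0)"
proof -
  interpret bernoulli_uniform_mixture M d p I U0 U1
    by (intro bernoulli_uniform_mixture.intro bernoulli_uniform_mixture_axioms.intro assms)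
  have "\<forall>j\<in>{1..d}. (\<integral>\<omega>. (\<Prod>i\<in>{j}. I_normalized i \<omega>) \<partial>M) = 0"
    using integral_I_normalized by simp
  with copula_of_U show ?thesis
    unfolding U_def[abs_def] I_normalized_def by blast
qed

end
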